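(* Let $\tilde X\in\mathbb{R}^{n\times k}$, $\Gamma=\tilde X^t\tilde X$, $\alpha\in\mathbb{R}^k$, and let $\mathcal{I},\mathcal{C}$ be subsets of $\{1,\dots,k\}$. For each $\ell$ put $B(\mathcal{C})_\ell=\sum_{\ell'\in\mathcal{C},\,\ell'\neq\ell}\Gamma_{\ell\ell'}\alpha_{\ell'}$. Then $$\|B(\mathcal{C})\|_{\mathcal{I},2}^2\le 2\,\|\alpha\|_{\mathcal{C},1}^2\,r(\mathcal{I}).$$
   Context: $\mathcal{G}_1,\dots,\mathcal{G}_p$ is a partition of $\{1,\dots,k\}$ into groups with $t_j=\#\mathcal{G}_j$; each index $\ell$ is written $\ell=(j,t)$ with $j$ the group containing $\ell$ and $t\in\{1,\dots,t_j\}$ its rank inside $\mathcal{G}_j$. For $u\in\mathbb{R}^k$, $\|u\|_{\mathcal{I},1}=\sum_{\ell\in\mathcal{I}}|u_\ell|$, $\|u\|_{\mathcal{I},2}^2=\sum_{\ell\in\mathcal{I}}u_\ell^2$. $\gamma_{BT}=\sup\{|\Gamma_{(j,t)(j',t')}|: t\neq t'\}$ (over all $j,j'$ and admissible ranks), $\gamma_{BG}=\sup\{|\Gamma_{(j,t)(j',t)}|: j\ne j',\ t\le t_j\wedge t_{j'}\}$, and $r(\mathcal{I})=\#(\mathcal{I})\,\gamma_{BT}^2+\#\{j:\exists t,\ (j,t)\in\mathcal{I}\}\,\gamma_{BG}^2$. *)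

theory Defs
  imports Main "HOL-Analysis.Analysis"
begin

definition gram :: "nat \<Rightarrow> (nat \<Rightarrow> nat \<Rightarrow> real) \<Rightarrow> nat \<Rightarrow> nat \<Rightarrow> real" where
  "gram n X l l' = (\<Sum>i=1..n. X i l * X i l')"

definition is_partition :: "nat \<Rightarrow> nat \<Rightarrow> (nat \<Rightarrow> nat set) \<Rightarrow> bool" where
  "is_partition k p G \<longleftrightarrow>
     (\<forall>j\<in>{1..p}. G j \<noteq> {}) \<and>
     (\<forall>j\<in>{1..p}. \<forall>j'\<in>{1..p}. j \<noteq> j' \<longrightarrow> G j \<inter> G j' = {}) \<and>
     (\<Union>j\<in>{1..p}. G j) = {1..k}"

text \<open>Rank of l inside the group G j (position in increasing order, from 1 to t_j).\<close>
definition rank_in :: "(nat \<Rightarrow> nat set) \<Rightarrow> nat \<Rightarrow> nat \<Rightarrow> nat" where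
  "rank_in G j l = card {l'\<in>G j. l' \<le> l}"

text \<open>Finite suprema; the convention sup of the empty set = 0 (values are absolute values).\<close>
definition gamma_BT :: "nat \<Rightarrow> (nat \<Rightarrow> nat set) \<Rightarrow> (nat \<Rightarrow> nat \<Rightarrow> real) \<Rightarrow> real" where
  "gamma_BT p G Gam = Max (insert 0 {\<bar>Gam l l'\<bar> | j j' l l'.
      j \<in> {1..p} \<and> j' \<in> {1..p} \<and> l \<in> G j \<and> l' \<in> G j' \<and> rank_in G j l \<noteq> rank_in G j' l'})"

definition gamma_BG :: "nat \<Rightarrow> (nat \<Rightarrow> nat set) \<Rightarrow> (nat \<Rightarrow> nat \<Rightarrow> real) \<Rightarrow> real" where
  "gamma_BG p G Gam = Max (insert 0 {\<bar>Gam l l'\<bar> | j j' l l'.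
      j \<in> {1..p} \<and> j' \<in> {1..p} \<and> j \<noteq> j' \<and> l \<in> G j \<and> l' \<in> G j' \<and> rank_in G j l = rank_in G j' l'})"

definition r_fun :: "nat \<Rightarrow> (nat \<Rightarrow> nat set) \<Rightarrow> (nat \<Rightarrow> nat \<Rightarrow> real) \<Rightarrow> nat set \<Rightarrow> real" where
  "r_fun p G Gam I = real (card I) * (gamma_BT p G Gam)\<^sup>2
     + real (card {j\<in>{1..p}. \<exists>l\<in>I. l \<in> G j}) * (gamma_BG p G Gam)\<^sup>2"

definition normI1 :: "nat set \<Rightarrow> (nat \<Rightarrow> real) \<Rightarrow> real" where
  "normI1 I u = (\<Sum>l\<in>I. \<bar>u l\<bar>)"

definition normI2sq :: "nat set \<Rightarrow> (nat \<Rightarrow> real) \<Rightarrow> real" where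
  "normI2sq I u = (\<Sum>l\<in>I. (u l)\<^sup>2)"

definition Bvec :: "(nat \<Rightarrow> nat \<Rightarrow> real) \<Rightarrow> (nat \<Rightarrow> real) \<Rightarrow> nat set \<Rightarrow> nat \<Rightarrow> real" where
  "Bvec Gam \<alpha> C l = (\<Sum>l'\<in>C - {l}. Gam l l' * \<alpha> l')"

end

theory Submission
  imports Defs
begin

text \<open>
  For l in I, a term Gamma(l,l') alpha(l') of B(C)(l) is controlled by gamma_BT when l' has
  another rank than l, and by gamma_BG otherwise, since then l' \<noteq> l lies in another group.
  Hence |B(C)(l)| \<le> gamma_BT |alpha|_{C,1} + gamma_BG b(l), where b(l) is the l1-mass of alpha
  on the indices of C sharing the rank of l, and (x + y)^2 \<le> 2 x^2 + 2 y^2. Within one group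
  the ranks are distinct, so the index sets carrying the masses b(l) are disjoint and
  sum b(l)^2 \<le> (sum b(l))^2 \<le> |alpha|_{C,1}^2; there is one such bound for every group met by I.
\<close>

lemma sum_power2_le_power2_sum:
  fixes f :: "'a \<Rightarrow> real"
  assumes "finite A" "\<And>x. x \<in> A \<Longrightarrow> 0 \<le> f x"
  shows "(\<Sum>x\<in>A. (f x)\<^sup>2) \<le> (\<Sum>x\<in>A. f x)\<^sup>2"
proof -
  have "(\<Sum>x\<in>A. (f x)\<^sup>2) \<le> (\<Sum>x\<in>A. f x * (\<Sum>y\<in>A. f y))"
  proof (rule sum_mono)
    fix x assume x: "x \<in> A"
    have "f x \<le> (\<Sum>y\<in>A. f y)" using member_le_sum[of x A f] assms x by auto
    then show "(f x)\<^sup>2 \<le> f x * (\<Sum>y\<in>A. f y)"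
      using assms(2)[OF x] by (simp add: power2_eq_square mult_left_mono)
  qed
  also have "\<dots> = (\<Sum>x\<in>A. f x)\<^sup>2" by (simp add: power2_eq_square sum_distrib_right)
  finally show ?thesis .
qed

lemma power2_le_of_abs_le_add:
  fixes z x y :: real
  assumes "\<bar>z\<bar> \<le> x + y" "0 \<le> x" "0 \<le> y"
  shows "z\<^sup>2 \<le> 2 * x\<^sup>2 + 2 * y\<^sup>2"
proof -
  have "z\<^sup>2 \<le> (x + y)\<^sup>2" using assms by (simp add: abs_le_square_iff[symmetric])
  also have "\<dots> = 2 * x\<^sup>2 + 2 * y\<^sup>2 - (x - y)\<^sup>2" by (simp add: power2_eq_square algebra_simps)
  also have "\<dots> \<le> 2 * x\<^sup>2 + 2 * y\<^sup>2" by simp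
  finally show ?thesis .
qed

lemma sum_fibres_le_sum:
  fixes f :: "'a \<Rightarrow> real"
  assumes "inj_on r A" "finite A" "finite C" "\<And>c. c \<in> C \<Longrightarrow> 0 \<le> f c"
  shows "(\<Sum>a\<in>A. \<Sum>c\<in>{c\<in>C. r c = r a}. f c) \<le> (\<Sum>c\<in>C. f c)"
proof -
  have "(\<Sum>a\<in>A. \<Sum>c\<in>{c\<in>C. r c = r a}. f c) = (\<Sum>c\<in>(\<Union>a\<in>A. {c\<in>C. r c = r a}). f c)"
    using assms(1-3) by (intro sum.UNION_disjoint[symmetric]) (auto dest: inj_onD)
  also have "\<dots> \<le> (\<Sum>c\<in>C. f c)"
    using assms(3,4) by (intro sum_mono2) auto
  finally show ?thesis .
qed

lemma strict_mono_on_rank: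
  fixes A :: "'a::linorder set"
  assumes "finite A"
  shows "strict_mono_on A (\<lambda>a. card {x\<in>A. x \<le> a})"
proof (rule strict_mono_onI)
  fix a b assume "a \<in> A" "b \<in> A" "a < b"
  then have "{x\<in>A. x \<le> a} \<subseteq> {x\<in>A. x \<le> b}" "b \<in> {x\<in>A. x \<le> b} - {x\<in>A. x \<le> a}" by auto
  then have "{x\<in>A. x \<le> a} \<subset> {x\<in>A. x \<le> b}" by blast
  then show "card {x\<in>A. x \<le> a} < card {x\<in>A. x \<le> b}"
    using assms by (intro psubset_card_mono) auto
qed

lemma finite_entry_set:
  assumes "\<And>j j' l l'. Q j j' l l' \<Longrightarrow> l \<in> A \<and> l' \<in> A" "finite A"
  shows "finite {f l l' | j j' l l'. Q j j' l l'}"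
proof (rule finite_subset)
  show "{f l l' | j j' l l'. Q j j' l l'} \<subseteq> (\<lambda>(l, l'). f l l') ` (A \<times> A)"
    using assms(1) by fastforce
qed (use assms(2) in auto)

text \<open>An index l is the pair (group_of p G l, rank_of p G l) of the notation l = (j, t).\<close>

definition group_of :: "nat \<Rightarrow> (nat \<Rightarrow> nat set) \<Rightarrow> nat \<Rightarrow> nat" where
  "group_of p G l = (THE j. j \<in> {1..p} \<and> l \<in> G j)"

definition rank_of :: "nat \<Rightarrow> (nat \<Rightarrow> nat set) \<Rightarrow> nat \<Rightarrow> nat" where
  "rank_of p G l = rank_in G (group_of p G l) l"

context
  fixes k p :: nat and G :: "nat \<Rightarrow> nat set"
  assumes partition: "is_partition k p G"
begin

lemma partition_group_subset: "j \<in> {1..p} \<Longrightarrow> G j \<subseteq> {1..k}"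
  using partition unfolding is_partition_def by blast

lemma partition_group_unique:
  "j \<in> {1..p} \<Longrightarrow> j' \<in> {1..p} \<Longrightarrow> l \<in> G j \<Longrightarrow> l \<in> G j' \<Longrightarrow> j = j'"
  using partition unfolding is_partition_def by blast

lemma group_of_eq:
  assumes "j \<in> {1..p}" "l \<in> G j"
  shows "group_of p G l = j"
  unfolding group_of_def using assms partition_group_unique by (intro the_equality) blast+

lemma group_of_mem: "l \<in> {1..k} \<Longrightarrow> group_of p G l \<in> {1..p} \<and> l \<in> G (group_of p G l)"
  using partition group_of_eq unfolding is_partition_def by blast

lemma rank_of_eq_rank_in: "j \<in> {1..p} \<Longrightarrow> l \<in> G j \<Longrightarrow> rank_of p G l = rank_in G j l"
  by (simp add: rank_of_def group_of_eq)

lemma inj_on_rank_of: "j \<in> {1..p} \<Longrightarrow> inj_on (rank_of p G) (G j)"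
proof -
  assume j: "j \<in> {1..p}"
  have "finite (G j)" using partition_group_subset[OF j] finite_subset by blast
  then have "inj_on (rank_in G j) (G j)"
    unfolding rank_in_def by (intro strict_mono_on_imp_inj_on strict_mono_on_rank)
  then show ?thesis using j by (simp add: inj_on_def rank_of_eq_rank_in)
qed

lemma gamma_BT_nonneg: "0 \<le> gamma_BT p G Gam"
  unfolding gamma_BT_def
  by (intro Max_ge finite.insertI finite_entry_set[where A = "{1..k}"])
    (use partition_group_subset in blast)+

lemma gamma_BG_nonneg: "0 \<le> gamma_BG p G Gam"
  unfolding gamma_BG_def
  by (intro Max_ge finite.insertI finite_entry_set[where A = "{1..k}"])
    (use partition_group_subset in blast)+

lemma abs_le_gamma_BT:
  assumes "l \<in> {1..k}" "l' \<in> {1..k}" "rank_of p G l \<noteq> rank_of p G l'"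
  shows "\<bar>Gam l l'\<bar> \<le> gamma_BT p G Gam"
  unfolding gamma_BT_def
  using group_of_mem[OF assms(1)] group_of_mem[OF assms(2)] assms(3)
  unfolding rank_of_def
  by (intro Max_ge finite.insertI finite_entry_set[where A = "{1..k}"])
    (use partition_group_subset in blast)+

lemma abs_le_gamma_BG:
  assumes "l \<in> {1..k}" "l' \<in> {1..k}" "l \<noteq> l'" "rank_of p G l = rank_of p G l'"
  shows "\<bar>Gam l l'\<bar> \<le> gamma_BG p G Gam"
proof -
  define j j' where "j = group_of p G l" and "j' = group_of p G l'"
  have j: "j \<in> {1..p}" "l \<in> G j" and j': "j' \<in> {1..p}" "l' \<in> G j'"
    using group_of_mem assms(1,2) unfolding j_def j'_def by auto
  have "j \<noteq> j'"
    using inj_on_rank_of[OF j(1)] j j' assms(3,4) by (auto dest: inj_onD)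
  moreover have "rank_in G j l = rank_in G j' l'"
    using assms(4) j j' by (simp add: rank_of_eq_rank_in)
  ultimately show ?thesis
    unfolding gamma_BG_def using j j'
    by (intro Max_ge finite.insertI finite_entry_set[where A = "{1..k}"])
      (use partition_group_subset in blast)+
qed

lemma abs_Bvec_le:
  assumes l: "l \<in> {1..k}" and C: "C \<subseteq> {1..k}"
  shows "\<bar>Bvec Gam \<alpha> C l\<bar> \<le> gamma_BT p G Gam * normI1 C \<alpha>
           + gamma_BG p G Gam * normI1 {l'\<in>C. rank_of p G l' = rank_of p G l} \<alpha>"
proof -
  define T Gg where "T = gamma_BT p G Gam" and "Gg = gamma_BG p G Gam"
  let ?same = "\<lambda>l'. rank_of p G l' = rank_of p G l"
  let ?bound = "\<lambda>l'. T * \<bar>\<alpha> l'\<bar> + Gg * (if ?same l' then \<bar>\<alpha> l'\<bar> else 0)"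
  have T: "0 \<le> T" and Gg: "0 \<le> Gg"
    unfolding T_def Gg_def by (rule gamma_BT_nonneg gamma_BG_nonneg)+
  have finC: "finite C" using C finite_subset by blast
  have term_le: "\<bar>Gam l l' * \<alpha> l'\<bar> \<le> ?bound l'" if l': "l' \<in> C - {l}" for l'
  proof -
    have "l' \<in> {1..k}" "l \<noteq> l'" using l' C by auto
    then have "\<bar>Gam l l'\<bar> \<le> (if ?same l' then Gg else T)"
      using l abs_le_gamma_BT abs_le_gamma_BG unfolding T_def Gg_def by auto
    then have "\<bar>Gam l l' * \<alpha> l'\<bar> \<le> (if ?same l' then Gg else T) * \<bar>\<alpha> l'\<bar>"
      by (simp add: abs_mult mult_right_mono)
    then show ?thesis using T Gg by (auto intro: order_trans)
  qed
  have "\<bar>Bvec Gam \<alpha> C l\<bar> \<le> (\<Sum>l'\<in>C - {l}. \<bar>Gam l l' * \<alpha> l'\<bar>)"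
    unfolding Bvec_def by (rule sum_abs)
  also have "\<dots> \<le> (\<Sum>l'\<in>C - {l}. ?bound l')"
    by (rule sum_mono) (rule term_le)
  also have "\<dots> \<le> (\<Sum>l'\<in>C. ?bound l')"
    using finC T Gg by (intro sum_mono2) auto
  also have "\<dots> = T * normI1 C \<alpha> + Gg * normI1 {l'\<in>C. ?same l'} \<alpha>"
    using finC by (simp add: normI1_def sum.distrib sum_distrib_left sum.inter_filter)
  finally show ?thesis unfolding T_def Gg_def .
qed

lemma sum_same_rank_mass_le:
  assumes I: "I \<subseteq> {1..k}" and C: "C \<subseteq> {1..k}"
  shows "(\<Sum>l\<in>I. (normI1 {l'\<in>C. rank_of p G l' = rank_of p G l} \<alpha>)\<^sup>2)
           \<le> real (card {j\<in>{1..p}. \<exists>l\<in>I. l \<in> G j}) * (normI1 C \<alpha>)\<^sup>2"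
proof -
  define b where "b l = normI1 {l'\<in>C. rank_of p G l' = rank_of p G l} \<alpha>" for l
  define J where "J = {j\<in>{1..p}. \<exists>l\<in>I. l \<in> G j}"
  have finI: "finite I" and finC: "finite C" using I C finite_subset by blast+
  have b: "0 \<le> b l" for l unfolding b_def normI1_def by (simp add: sum_nonneg)
  have group_le: "(\<Sum>l\<in>I \<inter> G j. (b l)\<^sup>2) \<le> (normI1 C \<alpha>)\<^sup>2" if j: "j \<in> {1..p}" for j
  proof -
    have "inj_on (rank_of p G) (I \<inter> G j)"
      using inj_on_rank_of[OF j] by (rule inj_on_subset) blast
    then have "(\<Sum>l\<in>I \<inter> G j. b l) \<le> normI1 C \<alpha>"
      unfolding b_def normI1_def using finI finC by (intro sum_fibres_le_sum) auto
    moreover have "(\<Sum>l\<in>I \<inter> G j. (b l)\<^sup>2) \<le> (\<Sum>l\<in>I \<inter> G j. b l)\<^sup>2"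
      using finI b by (intro sum_power2_le_power2_sum) auto
    ultimately show ?thesis
      by (meson b order_trans power_mono sum_nonneg)
  qed
  have "I = (\<Union>j\<in>J. I \<inter> G j)"
    using group_of_mem I unfolding J_def by blast
  then have "(\<Sum>l\<in>I. (b l)\<^sup>2) = (\<Sum>l\<in>(\<Union>j\<in>J. I \<inter> G j). (b l)\<^sup>2)"
    by (rule arg_cong)
  also have "\<dots> = (\<Sum>j\<in>J. \<Sum>l\<in>I \<inter> G j. (b l)\<^sup>2)"
    using finI partition_group_unique unfolding J_def
    by (intro sum.UNION_disjoint) auto
  also have "\<dots> \<le> (\<Sum>j\<in>J. (normI1 C \<alpha>)\<^sup>2)"
    using group_le unfolding J_def by (intro sum_mono) auto
  finally show ?thesis unfolding b_def J_def by simp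
qed

lemma normI2sq_Bvec_le:
  assumes I: "I \<subseteq> {1..k}" and C: "C \<subseteq> {1..k}"
  shows "normI2sq I (Bvec Gam \<alpha> C) \<le> 2 * (normI1 C \<alpha>)\<^sup>2 * r_fun p G Gam I"
proof -
  define T Gg S where "T = gamma_BT p G Gam" and "Gg = gamma_BG p G Gam" and "S = normI1 C \<alpha>"
  define b where "b l = normI1 {l'\<in>C. rank_of p G l' = rank_of p G l} \<alpha>" for l
  have nonneg: "0 \<le> T" "0 \<le> Gg" "0 \<le> S" "0 \<le> b l" for l
    unfolding T_def Gg_def S_def b_def normI1_def
    by (simp_all add: gamma_BT_nonneg gamma_BG_nonneg sum_nonneg)
  have "(Bvec Gam \<alpha> C l)\<^sup>2 \<le> 2 * (T * S)\<^sup>2 + 2 * (Gg * b l)\<^sup>2" if "l \<in> I" for l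
    using abs_Bvec_le[of l C Gam \<alpha>] that I C nonneg unfolding T_def Gg_def S_def b_def
    by (intro power2_le_of_abs_le_add) auto
  then have "normI2sq I (Bvec Gam \<alpha> C) \<le> (\<Sum>l\<in>I. 2 * (T * S)\<^sup>2 + 2 * Gg\<^sup>2 * (b l)\<^sup>2)"
    unfolding normI2sq_def by (intro sum_mono) (simp add: power_mult_distrib mult.assoc)
  also have "\<dots> = real (card I) * (2 * (T * S)\<^sup>2) + 2 * Gg\<^sup>2 * (\<Sum>l\<in>I. (b l)\<^sup>2)"
    by (simp add: sum.distrib sum_distrib_left)
  also have "\<dots> \<le> real (card I) * (2 * (T * S)\<^sup>2)
      + 2 * Gg\<^sup>2 * (real (card {j\<in>{1..p}. \<exists>l\<in>I. l \<in> G j}) * S\<^sup>2)"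
    using sum_same_rank_mass_le[OF I C, of \<alpha>] unfolding b_def S_def
    by (intro add_left_mono mult_left_mono) auto
  also have "\<dots> = 2 * S\<^sup>2 * r_fun p G Gam I"
    unfolding r_fun_def T_def Gg_def by (simp add: algebra_simps power_mult_distrib)
  finally show ?thesis unfolding S_def .
qed

end

theorem lemma3:
  fixes n k p :: nat and X :: "nat \<Rightarrow> nat \<Rightarrow> real" and \<alpha> :: "nat \<Rightarrow> real"
    and G :: "nat \<Rightarrow> nat set" and I C :: "nat set"
  assumes "is_partition k p G"
    and "I \<subseteq> {1..k}" and "C \<subseteq> {1..k}"
  shows "normI2sq I (Bvec (gram n X) \<alpha> C)
           \<le> 2 * (normI1 C \<alpha>)\<^sup>2 * r_fun p G (gram n X) I"
  using assms by (rule normI2sq_Bvec_le)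

end
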